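(* For $k\ge 0$ let $p_k(x)=\sqrt{(k+1)/\pi}\,x^k$ (the Bergman orthonormal polynomials of the unit disk), and for $n\ge 0$ define, for $x\in\mathbb{R}$, $$K_n(x,x)=\sum_{k=0}^np_k(x)^2,\quad K_n^{(0,1)}(x,x)=\sum_{k=0}^np_k(x)p_k'(x),\quad K_n^{(1,1)}(x,x)=\sum_{k=0}^np_k'(x)^2,$$ $$\mathcal K_n(x)=\frac{\sqrt{K_n^{(1,1)}(x,x)K_n(x,x)-(K_n^{(0,1)}(x,x))^2}}{K_n(x,x)}.$$ Then $$\lim_{n\to\infty}\mathcal K_n(x)=\begin{cases}\dfrac{\sqrt2}{1-x^2}, & |x|<1,\\[1ex] \dfrac{1}{x^2-1}, & |x|>1,\end{cases}$$ where the convergence holds locally uniformly on $(-1,1)$ and on $\{x\in\mathbb{R}:|x|>1\}$; moreover $$\mathcal K_n(\pm1)=\frac13\sqrt{\frac{n(n+3)}{2}}.$$ *)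

theory Defs
  imports "HOL-Analysis.Analysis"
begin

definition bp :: "nat \<Rightarrow> real \<Rightarrow> real" where
  "bp k x = sqrt (real (k + 1) / pi) * x ^ k"

definition Kn :: "nat \<Rightarrow> real \<Rightarrow> real" where
  "Kn n x = (\<Sum>k=0..n. (bp k x)^2)"

definition Kn01 :: "nat \<Rightarrow> real \<Rightarrow> real" where
  "Kn01 n x = (\<Sum>k=0..n. bp k x * deriv (bp k) x)"

definition Kn11 :: "nat \<Rightarrow> real \<Rightarrow> real" where
  "Kn11 n x = (\<Sum>k=0..n. (deriv (bp k) x)^2)"

definition curvK :: "nat \<Rightarrow> real \<Rightarrow> real" where
  "curvK n x = sqrt (Kn11 n x * Kn n x - (Kn01 n x)^2) / Kn n x"

end

(*
  Write t = x^2. Then pi K_n(x,x), pi K_n^(0,1)(x,x) / x and pi K_n^(1,1)(x,x) are the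
  polynomials sum (k+1) t^k, sum (k+1) k t^(k-1) and sum (k+1) k^2 t^(k-1), and the
  curvature is sqrt (K11 K - t K01^2) / K in terms of them.

  For |x| < 1 these polynomials are combinations of partial sums of the power series
  sum k^i t^k (i <= 3), which converge uniformly for t in [0, r], r < 1; their limits
  1/(1-t)^2, 2/(1-t)^3 and (2+4t)/(1-t)^4 give the limit sqrt 2 / (1-t).

  For |x| > 1 the summation is reversed, k = n - a. The radicand is the variance numerator
  of the weights (k+1) t^k and is unchanged by k |-> n - k; after dividing out (n+1) t^n,
  everything is expressed by moments of the Fejer weights (1 - a/(n+1)) s^a, s = 1/t.
  These converge uniformly to the moments of the geometric weights s^a, and the curvature
  tends to s/(1-s) = 1/(x^2-1).

  At x = 1 and x = -1 all sums are explicit polynomials in n.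
*)
theory Submission
  imports Defs
begin

section \<open>Power moments of the geometric series\<close>

definition moment_sum :: "nat \<Rightarrow> nat \<Rightarrow> real \<Rightarrow> real" where
  "moment_sum i n t = (\<Sum>k<n. real k ^ i * t ^ k)"

definition moment_series :: "nat \<Rightarrow> real \<Rightarrow> real" where
  "moment_series i t = (\<Sum>k. real k ^ i * t ^ k)"

lemma conv_radius_moment: "conv_radius (\<lambda>k. real k ^ i) = 1"
proof (rule conv_radius_ratio_limit_nonzero)
  have "(\<lambda>k. (real k / real (Suc k)) ^ i) \<longlonglongrightarrow> 1 ^ i"
    by (intro tendsto_power LIMSEQ_n_over_Suc_n)
  then show "(\<lambda>k. norm (real k ^ i) / norm (real (Suc k) ^ i)) \<longlonglongrightarrow> 1"
    by (simp add: power_divide)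
qed simp_all

lemma summable_moment: "\<bar>t\<bar> < 1 \<Longrightarrow> summable (\<lambda>k. real k ^ i * t ^ k)"
  using summable_in_conv_radius[of t "\<lambda>k. real k ^ i"] by (simp add: conv_radius_moment)

lemma moment_sum_LIMSEQ: "\<bar>t\<bar> < 1 \<Longrightarrow> (\<lambda>n. moment_sum i n t) \<longlonglongrightarrow> moment_series i t"
  unfolding moment_sum_def moment_series_def by (intro summable_LIMSEQ summable_moment)

lemma uniform_limit_moment_sum:
  "r < 1 \<Longrightarrow> uniform_limit {-r..r} (moment_sum i) (moment_series i) sequentially"
  using powser_uniform_limit[of r "\<lambda>k. real k ^ i" 0]
  by (simp add: conv_radius_moment cball_eq_atLeastAtMost moment_sum_def[abs_def]
      moment_series_def[abs_def])

lemma continuous_on_moment_series: "r < 1 \<Longrightarrow> continuous_on {-r..r} (moment_series i)"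
  using powser_continuous_suminf[of r "\<lambda>k. real k ^ i" 0]
  by (simp add: conv_radius_moment cball_eq_atLeastAtMost moment_series_def[abs_def])

lemma moment_sum_limits_Icc:
  assumes "r < 1"
  shows "uniform_limit {0..r} (moment_sum i) (moment_series i) sequentially"
    and "uniform_limit {0..r} (\<lambda>n. moment_sum i (Suc n)) (moment_series i) sequentially"
    and "continuous_on {0..r} (moment_series i)"
proof -
  have sub: "{0..r} \<subseteq> {-r..r}" by auto
  show lim: "uniform_limit {0..r} (moment_sum i) (moment_series i) sequentially"
    using uniform_limit_on_subset[OF uniform_limit_moment_sum[OF assms] sub] .
  then show "uniform_limit {0..r} (\<lambda>n. moment_sum i (Suc n)) (moment_series i) sequentially"
    by (simp add: filterlim_sequentially_Suc)
  show "continuous_on {0..r} (moment_series i)"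
    using continuous_on_subset[OF continuous_on_moment_series[OF assms] sub] .
qed

lemma moment_sum_Suc_recurrence:
  "(1 - t) * moment_sum (Suc i) n t
     = t * (\<Sum>j\<le>i. real (Suc i choose j) * moment_sum j n t) - real n ^ Suc i * t ^ n"
proof (induction n)
  case (Suc n)
  have "real (Suc n) ^ Suc i = (\<Sum>j\<le>Suc i. real (Suc i choose j) * real n ^ j)"
    using binomial_ring[of "real n" 1 "Suc i"] by (simp add: ac_simps)
  also have "\<dots> = (\<Sum>j\<le>i. real (Suc i choose j) * real n ^ j) + real n ^ Suc i"
    by (subst sum.atMost_Suc) (simp add: add.commute)
  finally show ?case using Suc
    by (simp add: moment_sum_def sum.distrib sum_distrib_left sum_distrib_right algebra_simps)
qed (simp add: moment_sum_def)

lemma moment_series_Suc_recurrence: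
  assumes "\<bar>t\<bar> < 1"
  shows "(1 - t) * moment_series (Suc i) t
           = t * (\<Sum>j\<le>i. real (Suc i choose j) * moment_series j t)"
proof (rule LIMSEQ_unique)
  show "(\<lambda>n. (1 - t) * moment_sum (Suc i) n t) \<longlonglongrightarrow> (1 - t) * moment_series (Suc i) t"
    by (intro tendsto_intros moment_sum_LIMSEQ assms)
  have "(\<lambda>n. real n ^ Suc i * t ^ n) \<longlonglongrightarrow> 0"
    by (intro summable_LIMSEQ_zero summable_moment assms)
  then have "(\<lambda>n. t * (\<Sum>j\<le>i. real (Suc i choose j) * moment_sum j n t) - real n ^ Suc i * t ^ n)
      \<longlonglongrightarrow> t * (\<Sum>j\<le>i. real (Suc i choose j) * moment_series j t) - 0"
    by (intro tendsto_intros moment_sum_LIMSEQ assms)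
  then show "(\<lambda>n. (1 - t) * moment_sum (Suc i) n t)
      \<longlonglongrightarrow> t * (\<Sum>j\<le>i. real (Suc i choose j) * moment_series j t)"
    by (simp add: moment_sum_Suc_recurrence)
qed

lemma moment_series_closed_forms:
  assumes "\<bar>t\<bar> < 1"
  shows "moment_series 0 t = 1 / (1 - t)"
    and "moment_series 1 t = t / (1 - t)^2"
    and "moment_series 2 t = t * (1 + t) / (1 - t)^3"
    and "moment_series 3 t = t * (1 + 4 * t + t^2) / (1 - t)^4"
proof -
  have t: "1 - t \<noteq> 0" using assms by auto
  show L0: "moment_series 0 t = 1 / (1 - t)"
    using geometric_sums[of t] assms by (simp add: moment_series_def sums_iff)
  have rec0: "(1 - t) * moment_series 0 t = 1"
    using t by (simp add: L0)
  have rec1: "(1 - t) * moment_series 1 t = t * moment_series 0 t"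
    using moment_series_Suc_recurrence[OF assms, of 0] by simp
  have rec2: "(1 - t) * moment_series 2 t = t * (moment_series 0 t + 2 * moment_series 1 t)"
    using moment_series_Suc_recurrence[OF assms, of 1] by (simp add: numeral_2_eq_2)
  have rec3: "(1 - t) * moment_series 3 t
      = t * (moment_series 0 t + 3 * moment_series 1 t + 3 * moment_series 2 t)"
    using moment_series_Suc_recurrence[OF assms, of 2] by (simp add: numeral_3_eq_3 numeral_2_eq_2)
  have "(1 - t)^2 * moment_series 1 t = t" using rec0 rec1 by algebra
  then show "moment_series 1 t = t / (1 - t)^2" using t by (simp add: field_simps)
  have "(1 - t)^3 * moment_series 2 t = t * (1 + t)" using rec0 rec1 rec2 by algebra
  then show "moment_series 2 t = t * (1 + t) / (1 - t)^3" using t by (simp add: field_simps)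
  have "(1 - t)^4 * moment_series 3 t = t * (1 + 4 * t + t^2)" using rec0 rec1 rec2 rec3 by algebra
  then show "moment_series 3 t = t * (1 + 4 * t + t^2) / (1 - t)^4"
    using t by (simp add: field_simps)
qed

section \<open>Kernel sums as polynomials in t = x^2\<close>

lemma deriv_bp: "deriv (bp k) x = sqrt (real (k + 1) / pi) * (real k * x ^ (k - 1))"
proof -
  have "((\<lambda>x. sqrt (real (k + 1) / pi) * x ^ k) has_real_derivative
      sqrt (real (k + 1) / pi) * (real k * x ^ (k - 1))) (at x)"
    by (auto intro!: derivative_eq_intros)
  then show ?thesis unfolding bp_def[abs_def] by (rule DERIV_imp_deriv)
qed

lemma bp_products:
  shows "pi * (bp k x)^2 = real (k + 1) * (x^2) ^ k"
    and "pi * (bp k x * deriv (bp k) x) = x * (real (k + 1) * real k * (x^2) ^ (k - 1))"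
    and "pi * (deriv (bp k) x)^2 = real (k + 1) * real k ^ 2 * (x^2) ^ (k - 1)"
proof -
  define c where "c = sqrt (real (k + 1) / pi)"
  have c: "pi * c^2 = real (k + 1)"
    by (simp add: c_def)
  have bp: "bp k x = c * x ^ k" and bp': "deriv (bp k) x = c * (real k * x ^ (k - 1))"
    by (simp_all add: bp_def deriv_bp c_def)
  show "pi * (bp k x)^2 = real (k + 1) * (x^2) ^ k"
    unfolding bp c[symmetric]
    by (simp add: power_mult_distrib flip: power_mult) (simp add: mult.commute)
  have "real k * (x ^ k * x ^ (k - 1)) = real k * (x * (x^2) ^ (k - 1))"
    by (cases k) (simp_all add: power_mult_distrib mult_2 power_add flip: power_mult)
  then show "pi * (bp k x * deriv (bp k) x) = x * (real (k + 1) * real k * (x^2) ^ (k - 1))"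
    unfolding bp bp' c[symmetric] by (simp add: algebra_simps power2_eq_square)
  show "pi * (deriv (bp k) x)^2 = real (k + 1) * real k ^ 2 * (x^2) ^ (k - 1)"
    unfolding bp' c[symmetric]
    by (simp add: power_mult_distrib flip: power_mult) (simp add: mult.commute)
qed

definition Kn_poly :: "nat \<Rightarrow> real \<Rightarrow> real" where
  "Kn_poly n t = (\<Sum>k=0..n. real (k + 1) * t ^ k)"

(* For k = 0 the exponent k - 1 truncates to 0, but the coefficient vanishes there. *)
definition Kn01_poly :: "nat \<Rightarrow> real \<Rightarrow> real" where
  "Kn01_poly n t = (\<Sum>k=0..n. real (k + 1) * real k * t ^ (k - 1))"

definition Kn11_poly :: "nat \<Rightarrow> real \<Rightarrow> real" where
  "Kn11_poly n t = (\<Sum>k=0..n. real (k + 1) * real k ^ 2 * t ^ (k - 1))"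

lemma pi_Kn: "pi * Kn n x = Kn_poly n (x^2)"
  by (simp add: Kn_def Kn_poly_def sum_distrib_left bp_products)

lemma pi_Kn01: "pi * Kn01 n x = x * Kn01_poly n (x^2)"
  by (simp add: Kn01_def Kn01_poly_def sum_distrib_left bp_products)

lemma pi_Kn11: "pi * Kn11 n x = Kn11_poly n (x^2)"
  by (simp add: Kn11_def Kn11_poly_def sum_distrib_left bp_products)

lemma curvK_eq_Kn_poly:
  "curvK n x = sqrt (Kn11_poly n (x^2) * Kn_poly n (x^2) - x^2 * (Kn01_poly n (x^2))^2)
      / Kn_poly n (x^2)"
proof -
  have Kn: "Kn n x = Kn_poly n (x^2) / pi" and Kn01: "Kn01 n x = x * Kn01_poly n (x^2) / pi"
    and Kn11: "Kn11 n x = Kn11_poly n (x^2) / pi"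
    using pi_Kn[of n x] pi_Kn01[of n x] pi_Kn11[of n x] by (simp_all add: field_simps)
  have "Kn11 n x * Kn n x - (Kn01 n x)^2
      = (Kn11_poly n (x^2) * Kn_poly n (x^2) - x^2 * (Kn01_poly n (x^2))^2) / pi^2"
    unfolding Kn Kn01 Kn11 by (simp add: field_simps power2_eq_square)
  then show ?thesis
    unfolding curvK_def Kn by (simp add: real_sqrt_divide)
qed

lemma Kn_poly_eq_moment_sum: "Kn_poly n t = moment_sum 1 (Suc n) t + moment_sum 0 (Suc n) t"
  unfolding Kn_poly_def moment_sum_def atLeast0AtMost lessThan_Suc_atMost
  by (simp add: sum.distrib[symmetric] algebra_simps)

lemma Kn01_poly_eq_moment_sum:
  "Kn01_poly n t = moment_sum 2 n t + 3 * moment_sum 1 n t + 2 * moment_sum 0 n t"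
  unfolding Kn01_poly_def moment_sum_def atLeast0AtMost sum.atMost_shift
  by (simp add: sum.distrib[symmetric] sum_distrib_left algebra_simps power2_eq_square)

lemma Kn11_poly_eq_moment_sum:
  "Kn11_poly n t = moment_sum 3 n t + 4 * moment_sum 2 n t + 5 * moment_sum 1 n t
      + 2 * moment_sum 0 n t"
  unfolding Kn11_poly_def moment_sum_def atLeast0AtMost sum.atMost_shift
  by (simp add: sum.distrib[symmetric] sum_distrib_left algebra_simps power2_eq_square
      power3_eq_cube)

lemma times_Kn01_poly: "t * Kn01_poly n t = (\<Sum>k=0..n. real (k + 1) * real k * t ^ k)"
  unfolding Kn01_poly_def sum_distrib_left
  by (rule sum.cong) (auto simp: power_eq_if)

lemma times_Kn11_poly: "t * Kn11_poly n t = (\<Sum>k=0..n. real (k + 1) * real k ^ 2 * t ^ k)"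
  unfolding Kn11_poly_def sum_distrib_left
  by (rule sum.cong) (auto simp: power_eq_if)

lemma Kn_poly_at_1: "Kn_poly n 1 = real ((n + 1) * (n + 2)) / 2"
  by (induction n) (simp_all add: Kn_poly_def field_simps)

lemma Kn01_poly_at_1: "Kn01_poly n 1 = real (n * (n + 1) * (n + 2)) / 3"
  by (induction n) (simp_all add: Kn01_poly_def field_simps)

lemma Kn11_poly_at_1: "Kn11_poly n 1 = real (n * (n + 1) * (n + 2) * (3 * n + 1)) / 12"
  by (induction n) (simp_all add: Kn11_poly_def field_simps power2_eq_square)

lemma curvK_at_unit:
  assumes "x^2 = 1"
  shows "curvK n x = (1/3) * sqrt (real (n * (n + 3)) / 2)"
proof -
  define m where "m = real n"
  define p where "p = (m + 1) * (m + 2)"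
  have "m \<ge> 0" "p > 0" by (simp_all add: m_def p_def)
  have P: "Kn_poly n 1 = p / 2"
    unfolding Kn_poly_at_1 m_def p_def by (simp add: algebra_simps)
  have radicand: "Kn11_poly n 1 * Kn_poly n 1 - (Kn01_poly n 1)^2 = (p / 6)^2 * (m * (m + 3) / 2)"
    unfolding Kn_poly_at_1 Kn01_poly_at_1 Kn11_poly_at_1 m_def p_def
    by (simp add: field_simps power2_eq_square)
  have "curvK n x = sqrt ((p / 6)^2 * (m * (m + 3) / 2)) / (p / 2)"
    unfolding curvK_eq_Kn_poly assms mult_1 radicand unfolding P ..
  also have "\<dots> = (1/3) * sqrt (m * (m + 3) / 2)"
    using \<open>p > 0\<close> unfolding real_sqrt_mult real_sqrt_abs by (simp add: field_simps)
  finally show ?thesis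
    by (simp add: m_def)
qed

section \<open>Reversing the order of summation\<close>

lemma sum_power_reflect:
  fixes t :: "'a::field"
  assumes "t \<noteq> 0"
  shows "(\<Sum>k=0..n. f k * t ^ k) = t ^ n * (\<Sum>a=0..n. f (n - a) * (1 / t) ^ a)"
proof -
  have "(\<Sum>k=0..n. f k * t ^ k) = (\<Sum>a=0..n. f (n - a) * t ^ (n - a))"
    by (subst sum.atLeastAtMost_rev) simp
  also have "\<dots> = (\<Sum>a=0..n. t ^ n * (f (n - a) * (1 / t) ^ a))"
    using assms by (intro sum.cong) (simp_all add: power_diff power_one_over field_simps)
  finally show ?thesis by (simp add: sum_distrib_left)
qed

lemma sum_variance_reflect:
  fixes g v :: "'a \<Rightarrow> 'b::comm_ring_1"
  shows "(\<Sum>a\<in>A. (c - g a)^2 * v a) * (\<Sum>a\<in>A. v a) - (\<Sum>a\<in>A. (c - g a) * v a)^2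
       = (\<Sum>a\<in>A. (g a)^2 * v a) * (\<Sum>a\<in>A. v a) - (\<Sum>a\<in>A. g a * v a)^2"
proof -
  have square: "(\<Sum>a\<in>A. (c - g a)^2 * v a)
      = c^2 * (\<Sum>a\<in>A. v a) - 2 * c * (\<Sum>a\<in>A. g a * v a) + (\<Sum>a\<in>A. (g a)^2 * v a)"
    by (simp add: power2_diff algebra_simps sum.distrib sum_subtractf sum_distrib_left
        sum_distrib_right)
  have linear: "(\<Sum>a\<in>A. (c - g a) * v a) = c * (\<Sum>a\<in>A. v a) - (\<Sum>a\<in>A. g a * v a)"
    by (simp add: algebra_simps sum_subtractf sum_distrib_left)
  show ?thesis
    unfolding square linear by (simp add: power2_eq_square algebra_simps)
qed

definition fejer_moment :: "nat \<Rightarrow> nat \<Rightarrow> real \<Rightarrow> real" where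
  "fejer_moment j n s = (\<Sum>a=0..n. real a ^ j * ((1 - real a / real (Suc n)) * s ^ a))"

lemma fejer_moment_eq_moment_sum:
  "fejer_moment j n s = moment_sum j (Suc n) s - moment_sum (Suc j) (Suc n) s / real (Suc n)"
  unfolding fejer_moment_def moment_sum_def atLeast0AtMost lessThan_Suc_atMost
  by (simp add: sum_subtractf sum_divide_distrib algebra_simps)

lemma bergman_sum_reflect:
  assumes "t \<noteq> 0"
  shows "(\<Sum>k=0..n. real (k + 1) * real k ^ j * t ^ k)
       = real (Suc n) * t ^ n
         * (\<Sum>a=0..n. (real n - real a) ^ j * ((1 - real a / real (Suc n)) * (1 / t) ^ a))"
proof -
  have "real (n - a + 1) * real (n - a) ^ j
      = real (Suc n) * ((real n - real a) ^ j * (1 - real a / real (Suc n)))" if "a \<le> n" for a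
    using that by (simp add: of_nat_diff field_simps)
  then show ?thesis
    unfolding sum_power_reflect[OF assms] sum_distrib_left
    by (intro sum.cong) (simp_all add: ac_simps)
qed

lemma curvK_eq_fejer_moment:
  assumes "x \<noteq> 0"
  defines "s \<equiv> 1 / x^2"
  shows "curvK n x = sqrt (s * (fejer_moment 2 n s * fejer_moment 0 n s - (fejer_moment 1 n s)^2))
      / fejer_moment 0 n s"
proof -
  define t where "t = x^2"
  define c where "c = real (Suc n) * t ^ n"
  define v where "v a = (1 - real a / real (Suc n)) * s ^ a" for a
  define W where "W j = (\<Sum>a=0..n. (real n - real a) ^ j * v a)" for j :: nat
  have t: "t > 0" and s: "s = 1 / t" and "c > 0"
    using assms by (simp_all add: t_def s_def c_def)
  have P: "Kn_poly n t = c * W 0" and Q: "t * Kn01_poly n t = c * W 1"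
    and R: "t * Kn11_poly n t = c * W 2"
    using bergman_sum_reflect[where j=0 and n=n] bergman_sum_reflect[where j=1 and n=n]
      bergman_sum_reflect[where j=2 and n=n] t
    unfolding Kn_poly_def times_Kn01_poly times_Kn11_poly W_def v_def c_def s
    by simp_all
  have W0: "W 0 = fejer_moment 0 n s"
    unfolding W_def v_def fejer_moment_def by simp
  have "W 2 * W 0 - (W 1)^2 = fejer_moment 2 n s * fejer_moment 0 n s - (fejer_moment 1 n s)^2"
    using sum_variance_reflect[of "real n" real v "{0..n}"]
    unfolding W_def v_def fejer_moment_def by (simp add: mult.assoc)
  moreover have "Kn11_poly n t * Kn_poly n t - t * (Kn01_poly n t)^2
      = c^2 * (s * (W 2 * W 0 - (W 1)^2))"
  proof -
    have K01: "Kn01_poly n t = c * W 1 / t" and K11: "Kn11_poly n t = c * W 2 / t"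
      using Q R t by (simp_all add: field_simps)
    show ?thesis
      unfolding P K01 K11 s using t by (simp add: field_simps power2_eq_square)
  qed
  ultimately show ?thesis
    using \<open>c > 0\<close> unfolding curvK_eq_Kn_poly t_def[symmetric] P W0
    by (simp add: real_sqrt_mult)
qed

section \<open>Uniform convergence\<close>

lemma sqrt_diff_squared_le: "(sqrt a - sqrt b)^2 \<le> 2 * \<bar>a - b\<bar>"
proof (cases "(0 \<le> a) = (0 \<le> b)")
  case True
  then have "0 \<le> sqrt a * sqrt b"
    by (auto simp: zero_le_mult_iff)
  then have "(sqrt a - sqrt b)^2 \<le> (sqrt a + sqrt b)^2"
    by (simp add: power2_diff power2_sum)
  then have "\<bar>sqrt a - sqrt b\<bar> \<le> \<bar>sqrt a + sqrt b\<bar>"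
    by (simp add: abs_le_square_iff)
  have "(sqrt a - sqrt b)^2 = \<bar>sqrt a - sqrt b\<bar> * \<bar>sqrt a - sqrt b\<bar>"
    by (simp add: power2_eq_square)
  also have "\<dots> \<le> \<bar>sqrt a - sqrt b\<bar> * \<bar>sqrt a + sqrt b\<bar>"
    using \<open>\<bar>sqrt a - sqrt b\<bar> \<le> \<bar>sqrt a + sqrt b\<bar>\<close> by (rule mult_left_mono) simp
  also have "\<dots> = \<bar>sqrt a * sqrt a - sqrt b * sqrt b\<bar>"
    by (simp add: algebra_simps flip: abs_mult)
  also have "\<dots> = \<bar>a - b\<bar>"
    using True by (auto simp: abs_if)
  finally show ?thesis by (rule order_trans) simp
next
  case False
  have "(sqrt a - sqrt b)^2 \<le> (sqrt a - sqrt b)^2 + (sqrt a + sqrt b)^2"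
    by simp
  also have "\<dots> = 2 * (sqrt a * sqrt a + sqrt b * sqrt b)"
    by (simp add: power2_eq_square algebra_simps)
  also have "\<dots> = 2 * \<bar>a - b\<bar>"
    using False by auto
  finally show ?thesis .
qed

lemma uniformly_continuous_on_sqrt: "uniformly_continuous_on UNIV sqrt"
  unfolding uniformly_continuous_on_def dist_real_def
proof (intro allI impI)
  fix e :: real
  assume "0 < e"
  show "\<exists>d>0. \<forall>x\<in>UNIV. \<forall>y\<in>UNIV. \<bar>y - x\<bar> < d \<longrightarrow> \<bar>sqrt y - sqrt x\<bar> < e"
  proof (intro exI[of _ "e^2 / 2"] conjI ballI impI)
    fix x y :: real
    assume "\<bar>y - x\<bar> < e^2 / 2"
    then have "\<bar>sqrt y - sqrt x\<bar>^2 < e^2"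
      using sqrt_diff_squared_le[of y x] by simp
    then show "\<bar>sqrt y - sqrt x\<bar> < e"
      by (rule power_less_imp_less_base) (use \<open>0 < e\<close> in simp)
  qed (use \<open>0 < e\<close> in simp)
qed

lemma uniform_limit_sqrt:
  "uniform_limit S f l F \<Longrightarrow> uniform_limit S (\<lambda>n x. sqrt (f n x)) (\<lambda>x. sqrt (l x)) F"
  by (rule uniform_limit_compose_uniformly_continuous_on[OF _ uniformly_continuous_on_sqrt]) auto

lemma uniform_limit_tendsto_const:
  "(f \<longlongrightarrow> l) F \<Longrightarrow> uniform_limit S (\<lambda>n x. f n) (\<lambda>x. l) F"
  by (simp add: uniform_limit_iff tendsto_iff)

lemma bounded_image_Icc:
  fixes f :: "real \<Rightarrow> 'a::metric_space"
  shows "continuous_on {a..b} f \<Longrightarrow> bounded (f ` {a..b})"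
  by (intro compact_imp_bounded compact_continuous_image compact_Icc)

lemma moment_series_kernel_combinations:
  assumes "\<bar>t\<bar> < 1"
  shows "moment_series 1 t + moment_series 0 t = 1 / (1 - t)^2"
    and "moment_series 2 t + 3 * moment_series 1 t + 2 * moment_series 0 t = 2 / (1 - t)^3"
    and "moment_series 3 t + 4 * moment_series 2 t + 5 * moment_series 1 t + 2 * moment_series 0 t
           = (2 + 4 * t) / (1 - t)^4"
proof -
  define u where "u = 1 / (1 - t)"
  have u: "(1 - t) * u = 1" using assms by (simp add: u_def)
  have L: "moment_series 0 t = u" "moment_series 1 t = t * u^2"
    "moment_series 2 t = t * (1 + t) * u^3" "moment_series 3 t = t * (1 + 4 * t + t^2) * u^4"
    unfolding moment_series_closed_forms[OF assms] u_def by (simp_all add: power_one_over)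
  have "moment_series 1 t + moment_series 0 t = u^2"
    unfolding L using u by algebra
  then show "moment_series 1 t + moment_series 0 t = 1 / (1 - t)^2"
    by (simp add: u_def power_one_over)
  have "moment_series 2 t + 3 * moment_series 1 t + 2 * moment_series 0 t = 2 * u^3"
    unfolding L using u by algebra
  then show "moment_series 2 t + 3 * moment_series 1 t + 2 * moment_series 0 t = 2 / (1 - t)^3"
    by (simp add: u_def power_one_over)
  have "moment_series 3 t + 4 * moment_series 2 t + 5 * moment_series 1 t + 2 * moment_series 0 t
      = (2 + 4 * t) * u^4"
    unfolding L using u by algebra
  then show "moment_series 3 t + 4 * moment_series 2 t + 5 * moment_series 1 t
      + 2 * moment_series 0 t = (2 + 4 * t) / (1 - t)^4"
    by (simp add: u_def power_one_over)
qed

lemma uniform_limit_Kn_polys: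
  assumes "r < 1"
  shows "uniform_limit {0..r} Kn_poly (\<lambda>t. 1 / (1 - t)^2) sequentially"
    and "uniform_limit {0..r} Kn01_poly (\<lambda>t. 2 / (1 - t)^3) sequentially"
    and "uniform_limit {0..r} Kn11_poly (\<lambda>t. (2 + 4 * t) / (1 - t)^4) sequentially"
proof -
  note S = moment_sum_limits_Icc[OF assms]
  have "\<bar>t\<bar> < 1" if "t \<in> {0..r}" for t
    using that assms by auto
  note closed = moment_series_kernel_combinations[OF this]
  have "uniform_limit {0..r} Kn_poly (\<lambda>t. moment_series 1 t + moment_series 0 t) sequentially"
    unfolding Kn_poly_eq_moment_sum[abs_def] by (intro uniform_limit_intros S)
  then show "uniform_limit {0..r} Kn_poly (\<lambda>t. 1 / (1 - t)^2) sequentially"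
    by (rule uniform_limit_cong'[THEN iffD1, rotated -1]) (simp_all only: closed)
  have "uniform_limit {0..r} Kn01_poly
      (\<lambda>t. moment_series 2 t + 3 * moment_series 1 t + 2 * moment_series 0 t) sequentially"
    unfolding Kn01_poly_eq_moment_sum[abs_def] by (intro uniform_limit_intros S)
  then show "uniform_limit {0..r} Kn01_poly (\<lambda>t. 2 / (1 - t)^3) sequentially"
    by (rule uniform_limit_cong'[THEN iffD1, rotated -1]) (simp_all only: closed)
  have "uniform_limit {0..r} Kn11_poly
      (\<lambda>t. moment_series 3 t + 4 * moment_series 2 t + 5 * moment_series 1 t
        + 2 * moment_series 0 t) sequentially"
    unfolding Kn11_poly_eq_moment_sum[abs_def] by (intro uniform_limit_intros S)
  then show "uniform_limit {0..r} Kn11_poly (\<lambda>t. (2 + 4 * t) / (1 - t)^4) sequentially"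
    by (rule uniform_limit_cong'[THEN iffD1, rotated -1]) (simp_all only: closed)
qed

lemma uniform_limit_fejer_moment:
  assumes "r < 1"
  shows "uniform_limit {0..r} (fejer_moment j) (moment_series j) sequentially"
proof -
  note S = moment_sum_limits_Icc[OF assms]
  have "uniform_limit {0..r}
      (\<lambda>n s. moment_sum j (Suc n) s - moment_sum (Suc j) (Suc n) s * inverse (real (Suc n)))
      (\<lambda>s. moment_series j s - moment_series (Suc j) s * 0) sequentially"
    by (intro uniform_limit_intros S uniform_limit_tendsto_const LIMSEQ_inverse_real_of_nat
        bounded_image_Icc continuous_intros)
  then show ?thesis
    by (simp add: fejer_moment_eq_moment_sum[abs_def] divide_inverse)
qed

lemma uniform_limit_Kn_poly_quotient:
  assumes "r < 1"
  shows "uniform_limit {0..r}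
      (\<lambda>n t. sqrt (Kn11_poly n t * Kn_poly n t - t * (Kn01_poly n t)^2) / Kn_poly n t)
      (\<lambda>t. sqrt 2 / (1 - t)) sequentially"
proof -
  note K = uniform_limit_Kn_polys[OF assms]
  define A where "A t = 1 / (1 - t)^2" for t :: real
  define B where "B t = 2 / (1 - t)^3" for t :: real
  define C where "C t = (2 + 4 * t) / (1 - t)^4" for t :: real
  have cont: "continuous_on {0..r} A" "continuous_on {0..r} B" "continuous_on {0..r} C"
    unfolding A_def B_def C_def using assms by (auto intro!: continuous_intros)
  have E: "uniform_limit {0..r}
      (\<lambda>n t. Kn11_poly n t * Kn_poly n t - t * (Kn01_poly n t * Kn01_poly n t))
      (\<lambda>t. C t * A t - t * (B t * B t)) sequentially"
    using K unfolding A_def[symmetric] B_def[symmetric] C_def[symmetric]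
    by (intro uniform_limit_intros bounded_image_Icc continuous_intros cont) simp_all
  have "uniform_limit {0..r}
      (\<lambda>n t. sqrt (Kn11_poly n t * Kn_poly n t - t * (Kn01_poly n t * Kn01_poly n t)) / Kn_poly n t)
      (\<lambda>t. sqrt (C t * A t - t * (B t * B t)) / A t) sequentially"
  proof (rule uniform_lim_divide[OF uniform_limit_sqrt[OF E] K(1)[folded A_def]])
    show "bounded ((\<lambda>t. sqrt (C t * A t - t * (B t * B t))) ` {0..r})"
      by (intro bounded_image_Icc continuous_intros cont)
    show "1 \<le> norm (A t)" if "t \<in> {0..r}" for t
      using that assms by (simp add: A_def power_le_one)
  qed simp
  then show ?thesis
  proof (rule uniform_limit_cong'[THEN iffD1, rotated -1])
    fix t :: real assume "t \<in> {0..r}"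
    define u where "u = 1 / (1 - t)"
    have "u > 0" using \<open>t \<in> {0..r}\<close> assms by (simp add: u_def)
    have A: "A t = u^2" and "B t = 2 * u^3" and "C t = (2 + 4 * t) * u^4"
      by (simp_all add: A_def B_def C_def u_def power_one_over)
    then have "C t * A t - t * (B t * B t) = (u^3)^2 * 2"
      by algebra
    then have "sqrt (C t * A t - t * (B t * B t)) = u^3 * sqrt 2"
      using \<open>u > 0\<close> by (simp only: real_sqrt_mult real_sqrt_abs) simp
    then show "sqrt (C t * A t - t * (B t * B t)) / A t = sqrt 2 / (1 - t)"
      unfolding A using \<open>u > 0\<close> by (simp add: u_def power2_eq_square power3_eq_cube)
  qed (simp add: power2_eq_square)
qed

lemma uniform_limit_fejer_quotient:
  assumes "r < 1"
  shows "uniform_limit {0..r}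
      (\<lambda>n s. sqrt (s * (fejer_moment 2 n s * fejer_moment 0 n s - (fejer_moment 1 n s)^2))
        / fejer_moment 0 n s)
      (\<lambda>s. s / (1 - s)) sequentially"
proof -
  note R = uniform_limit_fejer_moment[OF assms]
  note cont = moment_sum_limits_Icc(3)[OF assms]
  define L where "L = moment_series"
  have X: "uniform_limit {0..r}
      (\<lambda>n s. s * (fejer_moment 2 n s * fejer_moment 0 n s
        - fejer_moment 1 n s * fejer_moment 1 n s))
      (\<lambda>s. s * (L 2 s * L 0 s - L 1 s * L 1 s)) sequentially"
    unfolding L_def by (intro uniform_limit_intros R bounded_image_Icc continuous_intros cont)
  have "uniform_limit {0..r}
      (\<lambda>n s. sqrt (s * (fejer_moment 2 n s * fejer_moment 0 n s
        - fejer_moment 1 n s * fejer_moment 1 n s)) / fejer_moment 0 n s)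
      (\<lambda>s. sqrt (s * (L 2 s * L 0 s - L 1 s * L 1 s)) / L 0 s) sequentially"
  proof (rule uniform_lim_divide[OF uniform_limit_sqrt[OF X] R[of 0, folded L_def]])
    show "bounded ((\<lambda>s. sqrt (s * (L 2 s * L 0 s - L 1 s * L 1 s))) ` {0..r})"
      unfolding L_def by (intro bounded_image_Icc continuous_intros cont)
    show "1 \<le> norm (L 0 s)" if "s \<in> {0..r}" for s
      using that assms by (simp add: L_def moment_series_closed_forms)
  qed simp
  then show ?thesis
  proof (rule uniform_limit_cong'[THEN iffD1, rotated -1])
    fix s :: real assume "s \<in> {0..r}"
    then have "\<bar>s\<bar> < 1" "0 \<le> s" using assms by auto
    define u where "u = 1 / (1 - s)"
    have "u > 0" using \<open>\<bar>s\<bar> < 1\<close> by (simp add: u_def)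
    have L: "L 0 s = u" "L 1 s = s * u^2" "L 2 s = s * (1 + s) * u^3"
      unfolding L_def moment_series_closed_forms[OF \<open>\<bar>s\<bar> < 1\<close>] u_def
      by (simp_all add: power_one_over)
    have "s * (L 2 s * L 0 s - L 1 s * L 1 s) = (s * u^2)^2"
      unfolding L by algebra
    then have "sqrt (s * (L 2 s * L 0 s - L 1 s * L 1 s)) / L 0 s = s * u^2 / u"
      unfolding L(1) using \<open>0 \<le> s\<close> \<open>u > 0\<close> by simp
    also have "\<dots> = s / (1 - s)"
      using \<open>u > 0\<close> by (simp add: u_def power2_eq_square)
    finally show "sqrt (s * (L 2 s * L 0 s - L 1 s * L 1 s)) / L 0 s = s / (1 - s)" .
  qed (simp add: power2_eq_square)
qed

lemma uniform_limit_curvK_inside: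
  assumes "r < 1"
  shows "uniform_limit {x. x^2 \<le> r} curvK (\<lambda>x. sqrt 2 / (1 - x^2)) sequentially"
proof -
  have "(\<lambda>x. x^2) \<in> {x. x^2 \<le> r} \<rightarrow> {0..r}" by auto
  from uniform_limit_compose'[OF uniform_limit_Kn_poly_quotient[OF assms] this]
  show ?thesis
    by (rule uniform_limit_cong'[THEN iffD1, rotated -1]) (simp_all add: curvK_eq_Kn_poly)
qed

lemma uniform_limit_curvK_outside:
  assumes "1 < r"
  shows "uniform_limit {x. r \<le> x^2} curvK (\<lambda>x. 1 / (x^2 - 1)) sequentially"
proof -
  have "1 / r < 1" using assms by simp
  have "(\<lambda>x. 1 / x^2) \<in> {x. r \<le> x^2} \<rightarrow> {0..1 / r}"
    using assms by (auto simp: divide_simps)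
  from uniform_limit_compose'[OF uniform_limit_fejer_quotient[OF \<open>1 / r < 1\<close>] this]
  show ?thesis
  proof (rule uniform_limit_cong'[THEN iffD1, rotated -1])
    fix x assume "x \<in> {x. r \<le> x^2}"
    then have "1 < x^2" using assms by simp
    then have "x \<noteq> 0" by auto
    show "1 / x^2 / (1 - 1 / x^2) = 1 / (x^2 - 1)"
      using \<open>1 < x^2\<close> \<open>x \<noteq> 0\<close> by (simp add: field_simps)
    show "sqrt (1 / x^2 * (fejer_moment 2 n (1 / x^2) * fejer_moment 0 n (1 / x^2)
          - (fejer_moment 1 n (1 / x^2))^2)) / fejer_moment 0 n (1 / x^2) = curvK n x" for n
      using curvK_eq_fejer_moment[OF \<open>x \<noteq> 0\<close>] by simp
  qed
qed

lemma compact_continuous_less_bound: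
  fixes f :: "'a::topological_space \<Rightarrow> real"
  assumes "compact S" "continuous_on S f" "\<And>x. x \<in> S \<Longrightarrow> f x < c"
  shows "\<exists>r<c. \<forall>x\<in>S. f x \<le> r"
proof (cases "S = {}")
  case True
  then show ?thesis by (auto intro: lt_ex)
next
  case False
  then obtain x where "x \<in> S" "\<forall>y\<in>S. f y \<le> f x"
    using continuous_attains_sup[OF assms(1) False assms(2)] by blast
  then show ?thesis using assms(3) by blast
qed

theorem theorem3:
  shows "(\<forall>S. compact S \<and> S \<subseteq> {x::real. \<bar>x\<bar> < 1} \<longrightarrow>
            uniform_limit S curvK (\<lambda>x. sqrt 2 / (1 - x^2)) sequentially)
       \<and> (\<forall>S. compact S \<and> S \<subseteq> {x::real. \<bar>x\<bar> > 1} \<longrightarrow>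
            uniform_limit S curvK (\<lambda>x. 1 / (x^2 - 1)) sequentially)
       \<and> (\<forall>n. curvK n 1 = (1/3) * sqrt (real (n * (n + 3)) / 2)
             \<and> curvK n (-1) = (1/3) * sqrt (real (n * (n + 3)) / 2))"
proof (intro conjI allI impI)
  fix S :: "real set"
  assume S: "compact S \<and> S \<subseteq> {x. \<bar>x\<bar> < 1}"
  have "\<exists>r<1. \<forall>x\<in>S. x^2 \<le> r"
    by (rule compact_continuous_less_bound)
      (use S in \<open>auto intro!: continuous_intros simp: abs_square_less_1\<close>)
  then obtain r where "r < 1" "\<forall>x\<in>S. x^2 \<le> r" by blast
  then show "uniform_limit S curvK (\<lambda>x. sqrt 2 / (1 - x^2)) sequentially"
    by (intro uniform_limit_on_subset[OF uniform_limit_curvK_inside]) auto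
next
  fix S :: "real set"
  assume S: "compact S \<and> S \<subseteq> {x. \<bar>x\<bar> > 1}"
  have "1 < x^2" if "x \<in> S" for x
    using S that abs_square_le_1[of x] by auto
  then have "\<exists>r < -1. \<forall>x\<in>S. - (x^2) \<le> r"
    by (intro compact_continuous_less_bound) (use S in \<open>auto intro!: continuous_intros\<close>)
  then obtain r where "r < -1" "\<forall>x\<in>S. - (x^2) \<le> r" by blast
  then show "uniform_limit S curvK (\<lambda>x. 1 / (x^2 - 1)) sequentially"
    by (intro uniform_limit_on_subset[OF uniform_limit_curvK_outside[of "- r"]]) auto
next
  fix n
  show "curvK n 1 = (1/3) * sqrt (real (n * (n + 3)) / 2)"
    and "curvK n (-1) = (1/3) * sqrt (real (n * (n + 3)) / 2)"
    by (simp_all add: curvK_at_unit)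
qed

end
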